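(* Let $\mathcal F=(f_t)$ be a continuous flow on a compact metric space $(X,d)$ and let $\nu$ be an $\mathcal F$-invariant Borel probability measure which is almost expansive at scale $\varepsilon$. Let $s>0$ and $\alpha>0$. Then for all sufficiently small $\rho\in(0,\varepsilon/2)$ the following holds. For each $t>0$ let $\mathscr A_t$ be a partition adapted to a $(t,\rho)$-separated set of maximal cardinality, and let $A\subset X$ be a measurable set with $\nu(A)>0$. Then for every $\kappa>0$ there is $t_0$ such that for every $t\ge t_0$ there is a set $U$ which is a union of elements of $\mathscr A_t$ with $\nu(f_{t/2}U\setminus f_{[-3s,3s]}A)<\kappa$ and $\nu(A\setminus f_{t/2}U)<\alpha$.
   Context: $\Gamma_\varepsilon(x)=\{y: d(f_tx,f_ty)<\varepsilon\ \forall t\in\mathbb{R}\}$; $\mathrm{NE}(\varepsilon)=\{x:\Gamma_\varepsilon(x)\not\subset f_{[-s,s]}(x)\text{ for every } s>0\}$, where $f_{[-s,s]}A=\bigcup_{r\in[-s,s]}f_rA$. $\nu$ is almost expansive at scale $\varepsilon$ if $\nu(\mathrm{NE}(\varepsilon))=0$. Bowen ball $B_t(x,\rho)=\{y:d(f_rx,f_ry)<\rho\ \forall r\in[0,t]\}$. Given a $(t,\rho)$-separated set $E$ of maximal cardinality, a partition $\mathscr A$ is adapted to $E$ if for every $A'\in\mathscr A$ there is $x\in E$ with $B_t(x,\rho/2)\subset A'\subset\overline{B_t}(x,\rho)$. *)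

theory Defs
  imports "HOL-Analysis.Analysis" "HOL-Probability.Probability"
begin

definition continuous_flow :: "(real \<Rightarrow> 'a::metric_space \<Rightarrow> 'a) \<Rightarrow> bool" where
  "continuous_flow f \<longleftrightarrow>
     (\<forall>x. f 0 x = x) \<and> (\<forall>s t x. f (s + t) x = f s (f t x)) \<and>
     continuous_on UNIV (\<lambda>(t, x). f t x)"

definition invariant_borel_prob :: "(real \<Rightarrow> 'a::metric_space \<Rightarrow> 'a) \<Rightarrow> 'a measure \<Rightarrow> bool" where
  "invariant_borel_prob f \<nu> \<longleftrightarrow>
     prob_space \<nu> \<and> sets \<nu> = sets borel \<and>
     (\<forall>t. \<forall>B\<in>sets borel. emeasure \<nu> (f t -` B) = emeasure \<nu> B)"

definition flow_seg :: "(real \<Rightarrow> 'a \<Rightarrow> 'a) \<Rightarrow> real \<Rightarrow> real \<Rightarrow> 'a set \<Rightarrow> 'a set" where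
  "flow_seg f a b A = (\<Union>r\<in>{a..b}. f r ` A)"

definition Gamma :: "(real \<Rightarrow> 'a::metric_space \<Rightarrow> 'a) \<Rightarrow> real \<Rightarrow> 'a \<Rightarrow> 'a set" where
  "Gamma f \<epsilon> x = {y. \<forall>t. dist (f t x) (f t y) < \<epsilon>}"

definition NE :: "(real \<Rightarrow> 'a::metric_space \<Rightarrow> 'a) \<Rightarrow> real \<Rightarrow> 'a set" where
  "NE f \<epsilon> = {x. \<forall>s>0. \<not> Gamma f \<epsilon> x \<subseteq> flow_seg f (-s) s {x}}"

definition almost_expansive :: "(real \<Rightarrow> 'a::metric_space \<Rightarrow> 'a) \<Rightarrow> 'a measure \<Rightarrow> real \<Rightarrow> bool" where
  "almost_expansive f \<nu> \<epsilon> \<longleftrightarrow> NE f \<epsilon> \<in> null_sets \<nu>"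

definition bowen_ball :: "(real \<Rightarrow> 'a::metric_space \<Rightarrow> 'a) \<Rightarrow> real \<Rightarrow> 'a \<Rightarrow> real \<Rightarrow> 'a set" where
  "bowen_ball f t x \<rho> = {y. \<forall>r\<in>{0..t}. dist (f r x) (f r y) < \<rho>}"

definition closed_bowen_ball :: "(real \<Rightarrow> 'a::metric_space \<Rightarrow> 'a) \<Rightarrow> real \<Rightarrow> 'a \<Rightarrow> real \<Rightarrow> 'a set" where
  "closed_bowen_ball f t x \<rho> = {y. \<forall>r\<in>{0..t}. dist (f r x) (f r y) \<le> \<rho>}"

definition separated :: "(real \<Rightarrow> 'a::metric_space \<Rightarrow> 'a) \<Rightarrow> real \<Rightarrow> real \<Rightarrow> 'a set \<Rightarrow> bool" where
  "separated f t \<rho> E \<longleftrightarrow> (\<forall>x\<in>E. \<forall>y\<in>E. x \<noteq> y \<longrightarrow> y \<notin> bowen_ball f t x \<rho>)"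

definition max_separated :: "(real \<Rightarrow> 'a::metric_space \<Rightarrow> 'a) \<Rightarrow> real \<Rightarrow> real \<Rightarrow> 'a set \<Rightarrow> bool" where
  "max_separated f t \<rho> E \<longleftrightarrow> separated f t \<rho> E \<and> finite E \<and>
     (\<forall>E'. separated f t \<rho> E' \<longrightarrow> finite E' \<and> card E' \<le> card E)"

definition borel_partition :: "'a::topological_space set set \<Rightarrow> bool" where
  "borel_partition P \<longleftrightarrow> \<Union>P = UNIV \<and> {} \<notin> P \<and> P \<subseteq> sets borel \<and>
     (\<forall>A\<in>P. \<forall>B\<in>P. A \<noteq> B \<longrightarrow> A \<inter> B = {})"

definition adapted_partition ::
  "(real \<Rightarrow> 'a::metric_space \<Rightarrow> 'a) \<Rightarrow> real \<Rightarrow> real \<Rightarrow> 'a set \<Rightarrow> 'a set set \<Rightarrow> bool" where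
  "adapted_partition f t \<rho> E P \<longleftrightarrow> borel_partition P \<and>
     (\<forall>A'\<in>P. \<exists>x\<in>E. bowen_ball f t x (\<rho>/2) \<subseteq> A' \<and> A' \<subseteq> closed_bowen_ball f t x \<rho>)"

text \<open>Outer measure bound: \<open>\<nu>(D) < c\<close> read via a measurable cover (robust if D is not Borel).\<close>
definition outer_less :: "'a measure \<Rightarrow> 'a set \<Rightarrow> ennreal \<Rightarrow> bool" where
  "outer_less \<nu> D c \<longleftrightarrow> (\<exists>W\<in>sets \<nu>. D \<subseteq> W \<and> emeasure \<nu> W < c)"

end

theory Submission
  imports Defs
begin

text \<open>
  The set NE_at s c consists of the points x for which some y whose orbit stays c-close to
  that of x for all time does not lie on the orbit segment of x over [-s, s]. As c tends to 0
  these sets decrease into NE(\<epsilon>) (a limit of small return times is a period of x), so for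
  small \<rho> the set NE_at s (2\<rho>) has measure less than \<alpha>. Take a compact K inside A that
  avoids it, with \<nu>(A - K) < \<alpha>, and let U be the union of those partition elements whose
  f_{t/2}-image meets K. Each element lies in a closed Bowen ball of radius \<rho> and length t,
  so every point of f_{t/2} U stays 2\<rho>-close to the orbit of some point of K during
  [-t/2, t/2]. As t grows these sets decrease to points staying 2\<rho>-close to the orbit of a
  point of K for all time, which lie in f_{[-s,s]} K because K avoids NE_at s (2\<rho>);
  continuity of \<nu> from above makes the excess smaller than \<kappa>.
\<close>

lemma (in finite_measure) decseq_measure_less:
  assumes "range A \<subseteq> sets M" "decseq A" "measure M (\<Inter>n. A n) = 0" "e > 0"
  shows "\<exists>n. measure M (A n) < e"
proof -
  have "(\<lambda>n. measure M (A n)) \<longlonglongrightarrow> 0"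
    using finite_Lim_measure_decseq[OF assms(1,2)] assms(3) by simp
  then have "\<forall>\<^sub>F n in sequentially. measure M (A n) < e"
    using assms(4) by (rule order_tendstoD)
  then show ?thesis
    by (auto simp: eventually_sequentially)
qed

lemma closed_outer_approx_open:
  fixes M :: "'a::metric_space measure"
  assumes "finite_measure M" and sb: "sets M = sets borel" and "closed F" "e > 0"
  shows "\<exists>G. open G \<and> F \<subseteq> G \<and> measure M (G - F) < e"
proof -
  interpret finite_measure M by fact
  define G where "G n = (\<Union>x\<in>F. ball x (1 / Suc n))" for n
  have G_open: "open (G n)" for n
    unfolding G_def by blast
  have "decseq G"
    unfolding decseq_def G_def
    by (intro allI impI UN_mono order_refl subset_ball) (simp add: frac_le)
  then have dec: "decseq (\<lambda>n. G n - F)"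
    by (auto simp: decseq_def)
  have "(\<Inter>n. G n) \<subseteq> closure F"
  proof
    fix x assume x: "x \<in> (\<Inter>n. G n)"
    show "x \<in> closure F"
      unfolding closure_approachable
    proof (intro allI impI)
      fix \<delta> :: real assume "\<delta> > 0"
      then obtain n where "1 / Suc n < \<delta>"
        by (rule nat_approx_posE)
      moreover obtain y where "y \<in> F" "dist y x < 1 / Suc n"
        using x by (auto simp: G_def)
      ultimately show "\<exists>y\<in>F. dist y x < \<delta>"
        by force
    qed
  qed
  then have "(\<Inter>n. G n - F) = {}"
    using \<open>closed F\<close> by auto
  moreover have "range (\<lambda>n. G n - F) \<subseteq> sets M"
    using G_open \<open>closed F\<close>
    by (intro image_subsetI sets.Diff) (simp_all add: sb borel_open borel_closed)
  ultimately obtain n where "measure M (G n - F) < e"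
    using decseq_measure_less[OF _ dec _ \<open>e > 0\<close>] by (metis measure_empty)
  moreover have "F \<subseteq> G n"
    unfolding G_def by force
  ultimately show ?thesis
    using G_open by blast
qed

lemma (in finite_measure) measure_UN_minus_initial_less:
  fixes F :: "nat \<Rightarrow> 'a set"
  assumes "range F \<subseteq> sets M" "e > 0"
  shows "\<exists>n. measure M ((\<Union>i. F i) - (\<Union>i<n. F i)) < e"
proof (rule decseq_measure_less[where A = "\<lambda>n. (\<Union>i. F i) - (\<Union>i<n. F i)"])
  show "range (\<lambda>n. (\<Union>i. F i) - (\<Union>i<n. F i)) \<subseteq> sets M"
    using assms(1) by auto
  show "decseq (\<lambda>n. (\<Union>i. F i) - (\<Union>i<n. F i))"
    unfolding decseq_def by auto
  have "(\<Inter>n. (\<Union>i. F i) - (\<Union>i<n. F i)) = {}"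
    by auto
  then show "measure M (\<Inter>n. (\<Union>i. F i) - (\<Union>i<n. F i)) = 0"
    by (simp only: measure_empty)
qed fact

lemma (in finite_measure) measure_UN_le_sums:
  fixes A :: "nat \<Rightarrow> 'a set"
  assumes "range A \<subseteq> sets M" "\<And>i. measure M (A i) \<le> c i" "c sums s"
  shows "measure M (\<Union>i. A i) \<le> s"
proof -
  have summable: "summable (\<lambda>i. measure M (A i))"
    using assms(2) by (intro summable_comparison_test'[OF sums_summable[OF assms(3)]]) simp
  have "measure M (\<Union>i. A i) \<le> (\<Sum>i. measure M (A i))"
    using assms(1) summable by (rule finite_measure_subadditive_countably)
  also have "\<dots> \<le> (\<Sum>i. c i)"
    using assms(2) by (intro suminf_le summable sums_summable[OF assms(3)])
  finally show ?thesis
    using sums_unique[OF assms(3)] by simp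
qed

definition closed_open_regular :: "'a::topological_space measure \<Rightarrow> 'a set \<Rightarrow> bool" where
  "closed_open_regular M B \<longleftrightarrow>
     (\<forall>e>0. \<exists>F G. closed F \<and> open G \<and> F \<subseteq> B \<and> B \<subseteq> G \<and> measure M (G - F) < e)"

lemma closed_open_regular_Compl:
  assumes "closed_open_regular M B"
  shows "closed_open_regular M (UNIV - B)"
  unfolding closed_open_regular_def
proof (intro allI impI)
  fix e :: real assume "e > 0"
  then obtain F G where FG: "closed F" "open G" "F \<subseteq> B" "B \<subseteq> G" "measure M (G - F) < e"
    using assms unfolding closed_open_regular_def by metis
  have "(UNIV - F) - (UNIV - G) = G - F"
    by blast
  with FG(5) have "measure M ((UNIV - F) - (UNIV - G)) < e"
    by (simp only:)
  moreover have "closed (UNIV - G)" "open (UNIV - F)" "UNIV - G \<subseteq> UNIV - B" "UNIV - B \<subseteq> UNIV - F"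
    using FG(1-4) by (auto intro: closed_Diff open_Diff)
  ultimately show "\<exists>F' G'. closed F' \<and> open G' \<and> F' \<subseteq> UNIV - B \<and> UNIV - B \<subseteq> G' \<and>
      measure M (G' - F') < e"
    by blast
qed

lemma closed_open_regular_UN:
  fixes M :: "'a::metric_space measure" and B :: "nat \<Rightarrow> 'a set"
  assumes "finite_measure M" and sb: "sets M = sets borel"
    and regular: "\<And>i. closed_open_regular M (B i)"
  shows "closed_open_regular M (\<Union>i. B i)"
  unfolding closed_open_regular_def
proof (intro allI impI)
  interpret finite_measure M by fact
  fix e :: real assume "e > 0"
  define c where "c i = e / 2 * (1 / 2) ^ Suc i" for i :: nat
  have c_sums: "c sums (e / 2)"
    unfolding c_def using sums_mult[OF power_half_series, of "e / 2"] by simp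
  have "c i > 0" for i
    using \<open>e > 0\<close> by (simp add: c_def)
  then have "\<forall>i. \<exists>F G. closed F \<and> open G \<and> F \<subseteq> B i \<and> B i \<subseteq> G \<and> measure M (G - F) < c i"
    using regular unfolding closed_open_regular_def by metis
  then obtain F G where FG: "\<And>i. closed (F i)" "\<And>i. open (G i)" "\<And>i. F i \<subseteq> B i"
      "\<And>i. B i \<subseteq> G i" "\<And>i. measure M (G i - F i) < c i"
    by metis
  have F_sets: "F i \<in> sets M" and G_sets: "G i \<in> sets M" for i
    using FG(1,2) by (simp_all add: sb borel_closed borel_open)
  obtain n where n: "measure M ((\<Union>i. F i) - (\<Union>i<n. F i)) < e / 2"
    using measure_UN_minus_initial_less[of F "e / 2"] F_sets \<open>e > 0\<close> by auto
  have GF: "measure M (\<Union>i. G i - F i) \<le> e / 2"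
    using F_sets G_sets FG(5) by (intro measure_UN_le_sums[OF _ _ c_sums]) (auto intro: less_imp_le)
  have "(\<Union>i. G i) - (\<Union>i<n. F i) \<subseteq> (\<Union>i. G i - F i) \<union> ((\<Union>i. F i) - (\<Union>i<n. F i))"
    by blast
  then have "measure M ((\<Union>i. G i) - (\<Union>i<n. F i))
      \<le> measure M ((\<Union>i. G i - F i) \<union> ((\<Union>i. F i) - (\<Union>i<n. F i)))"
    using F_sets G_sets by (intro finite_measure_mono) auto
  also have "\<dots> \<le> measure M (\<Union>i. G i - F i) + measure M ((\<Union>i. F i) - (\<Union>i<n. F i))"
    using F_sets G_sets by (intro measure_Un_le) auto
  finally have "measure M ((\<Union>i. G i) - (\<Union>i<n. F i)) < e"
    using GF n by simp
  moreover have "closed (\<Union>i<n. F i)" "open (\<Union>i. G i)"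
    using FG(1,2) by auto
  moreover have "(\<Union>i<n. F i) \<subseteq> (\<Union>i. B i)"
    by (intro UN_mono FG(3) subset_UNIV)
  moreover have "(\<Union>i. B i) \<subseteq> (\<Union>i. G i)"
    by (intro UN_mono FG(4) order_refl)
  ultimately show "\<exists>F G. closed F \<and> open G \<and> F \<subseteq> (\<Union>i. B i) \<and> (\<Union>i. B i) \<subseteq> G \<and>
      measure M (G - F) < e"
    by meson
qed

lemma borel_closed_open_regular:
  fixes M :: "'a::metric_space measure"
  assumes "finite_measure M" and sb: "sets M = sets borel" and "B \<in> sets borel"
  shows "closed_open_regular M B"
proof -
  have "sets (borel :: 'a measure) = sigma_sets UNIV (Collect closed)"
    by (subst borel_eq_closed) (simp add: sets_measure_of)
  then have "B \<in> sigma_sets UNIV (Collect closed)"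
    using assms(3) by simp
  then show ?thesis
  proof (induction rule: sigma_sets.induct)
    case (Basic F)
    then show ?case
      using closed_outer_approx_open[OF assms(1) sb, of F]
      unfolding closed_open_regular_def by blast
  next
    case Empty
    show ?case
      unfolding closed_open_regular_def by (intro allI impI exI[of _ "{}"]) simp
  next
    case (Compl B)
    from Compl.IH show ?case
      by (rule closed_open_regular_Compl)
  next
    case (Union B)
    from Union.IH show ?case
      by (rule closed_open_regular_UN[OF assms(1) sb])
  qed
qed

lemma outer_lessI:
  assumes "finite_measure M" "W \<in> sets M" "D \<subseteq> W" "measure M W < c"
  shows "outer_less M D (ennreal c)"
  using assms unfolding outer_less_def
  by (auto simp: finite_measure.emeasure_eq_measure ennreal_less_iff)

lemma flow_seg_mono:
  "a' \<le> a \<Longrightarrow> b \<le> b' \<Longrightarrow> A \<subseteq> A' \<Longrightarrow> flow_seg f a b A \<subseteq> flow_seg f a' b' A'"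
  unfolding flow_seg_def by fastforce

lemma closed_Collect_ball_le:
  fixes g h :: "'i \<Rightarrow> 'a::topological_space \<Rightarrow> 'b::linorder_topology"
  assumes "\<And>u. continuous_on UNIV (g u)" "\<And>u. continuous_on UNIV (h u)"
  shows "closed {x. \<forall>u\<in>I. g u x \<le> h u x}"
  unfolding Ball_def using assms
  by (intro closed_Collect_all closed_Collect_imp open_Collect_const closed_Collect_le)

lemma closed_not_in_dist_ge:
  fixes S :: "'a::metric_space set"
  assumes "closed S" "y \<notin> S"
  shows "\<exists>m. \<forall>z\<in>S. 1 / Suc m \<le> dist z y"
proof (cases "S = {}")
  case False
  obtain m where m: "1 / Suc m < infdist y S"
    using infdist_pos_not_in_closed[OF assms(1) False assms(2)] by (rule nat_approx_posE)
  have "1 / Suc m \<le> dist z y" if "z \<in> S" for z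
    using m infdist_le[OF that, of y] by (simp add: dist_commute)
  then show ?thesis
    by blast
qed simp

locale compact_flow =
  fixes f :: "real \<Rightarrow> 'a::metric_space \<Rightarrow> 'a"
  assumes compact_UNIV: "compact (UNIV :: 'a set)" and flow: "continuous_flow f"
begin

lemma flow_zero [simp]: "f 0 x = x"
  using flow unfolding continuous_flow_def by blast

lemma flow_add: "f (s + t) x = f s (f t x)"
  using flow unfolding continuous_flow_def by blast

lemma flow_inverse [simp]: "f t (f (- t) x) = x"
  by (metis flow_add flow_zero add.right_inverse)

lemma continuous_on_flow [continuous_intros]:
  assumes "continuous_on S g" "continuous_on S h"
  shows "continuous_on S (\<lambda>p. f (g p) (h p))"
proof -
  have "continuous_on UNIV (\<lambda>(t, x). f t x)"
    using flow unfolding continuous_flow_def by blast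
  then have "continuous_on S ((\<lambda>(t, x). f t x) \<circ> (\<lambda>p. (g p, h p)))"
    by (intro continuous_on_compose continuous_on_Pair assms) (auto elim: continuous_on_subset)
  then show ?thesis
    by (simp add: o_def)
qed

lemma tendsto_flow [tendsto_intros]:
  assumes "(g \<longlongrightarrow> t) F" "(h \<longlongrightarrow> x) F"
  shows "((\<lambda>n. f (g n) (h n)) \<longlongrightarrow> f t x) F"
proof -
  have "continuous_on UNIV (\<lambda>p. f (fst p) (snd p))"
    by (intro continuous_intros)
  then have "isCont (\<lambda>p. f (fst p) (snd p)) (t, x)"
    by (simp add: continuous_on_eq_continuous_at)
  from isCont_tendsto_compose[OF this tendsto_Pair[OF assms]] show ?thesis
    by simp
qed

lemma closed_imp_compact: "closed S \<Longrightarrow> compact (S :: 'a set)"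
  using compact_Int_closed[OF compact_UNIV, of S] by simp

lemma
  assumes "closed (S :: ('a \<times> 'a) set)"
  shows closed_fst_image: "closed (fst ` S)" and closed_snd_image: "closed (snd ` S)"
proof -
  have "compact S"
    using compact_Int_closed[OF compact_Times[OF compact_UNIV compact_UNIV] assms] by simp
  show "closed (fst ` S)"
    using \<open>compact S\<close> by (intro compact_imp_closed compact_continuous_image continuous_intros)
  show "closed (snd ` S)"
    using \<open>compact S\<close> by (intro compact_imp_closed compact_continuous_image continuous_intros)
qed

lemma flow_seg_eq_image: "flow_seg f a b K = (\<lambda>p. f (fst p) (snd p)) ` ({a..b} \<times> K)"
  by (force simp: flow_seg_def)

lemma compact_flow_seg: "compact K \<Longrightarrow> compact (flow_seg f a b K)"
  unfolding flow_seg_eq_image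
  by (intro compact_continuous_image continuous_intros compact_Times compact_Icc)

definition closed_Gamma :: "real \<Rightarrow> 'a \<Rightarrow> 'a set" where
  "closed_Gamma c x = {y. \<forall>t. dist (f t x) (f t y) \<le> c}"

definition NE_at :: "real \<Rightarrow> real \<Rightarrow> 'a set" where
  "NE_at s c = {x. \<not> closed_Gamma c x \<subseteq> flow_seg f (- s) s {x}}"

lemma closed_Gamma_mono: "c \<le> c' \<Longrightarrow> closed_Gamma c x \<subseteq> closed_Gamma c' x"
  unfolding closed_Gamma_def by (auto intro: order_trans)

lemma NE_at_mono: "c \<le> c' \<Longrightarrow> NE_at s c \<subseteq> NE_at s c'"
  unfolding NE_at_def using closed_Gamma_mono by blast

lemma NE_at_borel: "NE_at s c \<in> sets borel"
proof -
  define Q where "Q m = {p. snd p \<in> closed_Gamma c (fst p) \<and>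
    (\<forall>r\<in>{-s..s}. 1 / Suc m \<le> dist (f r (fst p)) (snd p))}" for m
  have "closed (fst ` Q m)" for m
  proof -
    have "Q m = {p. \<forall>u\<in>UNIV. dist (f u (fst p)) (f u (snd p)) \<le> c} \<inter>
        {p. \<forall>r\<in>{-s..s}. 1 / Suc m \<le> dist (f r (fst p)) (f 0 (snd p))}"
      by (auto simp: Q_def closed_Gamma_def)
    then have "closed (Q m)"
      by (simp only:) (intro closed_Int closed_Collect_ball_le continuous_intros)
    then show ?thesis
      by (rule closed_fst_image)
  qed
  moreover have "NE_at s c = (\<Union>m. fst ` Q m)"
  proof (intro equalityI subsetI)
    fix x assume "x \<in> NE_at s c"
    then obtain y where y: "y \<in> closed_Gamma c x" "y \<notin> flow_seg f (- s) s {x}"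
      unfolding NE_at_def by blast
    moreover have "closed (flow_seg f (- s) s {x})"
      by (intro compact_imp_closed compact_flow_seg) simp
    ultimately obtain m where "\<forall>z\<in>flow_seg f (- s) s {x}. 1 / Suc m \<le> dist z y"
      using closed_not_in_dist_ge by blast
    with y have "(x, y) \<in> Q m"
      by (auto simp: Q_def flow_seg_def)
    then show "x \<in> (\<Union>m. fst ` Q m)"
      by force
  next
    fix x assume "x \<in> (\<Union>m. fst ` Q m)"
    then obtain m y where "(x, y) \<in> Q m"
      by force
    then have "y \<in> closed_Gamma c x" "y \<notin> flow_seg f (- s) s {x}"
      by (auto simp: Q_def flow_seg_def)
    then show "x \<in> NE_at s c"
      unfolding NE_at_def by blast
  qed
  ultimately show ?thesis
    by (simp add: borel_closed sets.countable_UN)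
qed

lemma convergent_returns_in_flow_seg:
  assumes "s > 0" "\<And>n. r n \<in> {-S..S}" "(\<lambda>n. f (r n) x) \<longlonglongrightarrow> x"
  shows "\<exists>n. f (r n) x \<in> flow_seg f (- s) s {x}"
proof -
  obtain l \<phi> where "strict_mono \<phi>" and lim: "(r \<circ> \<phi>) \<longlonglongrightarrow> l"
    using seq_compactE[OF compact_imp_seq_compact[OF compact_Icc[of "- S" S]], of r] assms(2)
    by blast
  have "(\<lambda>n. f (r (\<phi> n)) x) \<longlonglongrightarrow> f l x"
    using lim by (intro tendsto_intros) (simp add: o_def)
  moreover have "(\<lambda>n. f (r (\<phi> n)) x) \<longlonglongrightarrow> x"
    using LIMSEQ_subseq_LIMSEQ[OF assms(3) \<open>strict_mono \<phi>\<close>] by (simp add: o_def)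
  ultimately have periodic: "f l x = x"
    by (rule LIMSEQ_unique)
  obtain n where "\<bar>r (\<phi> n) - l\<bar> < s"
    using LIMSEQ_D[OF lim \<open>s > 0\<close>] by auto
  then have "f (r (\<phi> n) - l) x \<in> flow_seg f (- s) s {x}"
    unfolding flow_seg_def by (intro UN_I[of "r (\<phi> n) - l"]) auto
  moreover have "f (r (\<phi> n) - l) x = f (r (\<phi> n)) x"
    using flow_add[of "r (\<phi> n) - l" l x] periodic by simp
  ultimately show ?thesis
    by (intro exI[of _ "\<phi> n"]) simp
qed

lemma NE_at_return:
  assumes "Gamma f \<epsilon> x \<subseteq> flow_seg f (- S) S {x}" "x \<in> NE_at s c" "c < \<epsilon>"
  shows "\<exists>r\<in>{-S..S}. dist (f r x) x \<le> c \<and> f r x \<notin> flow_seg f (- s) s {x}"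
proof -
  obtain y where y: "y \<in> closed_Gamma c x" "y \<notin> flow_seg f (- s) s {x}"
    using assms(2) unfolding NE_at_def by blast
  then have close: "dist (f t x) (f t y) \<le> c" for t
    by (simp add: closed_Gamma_def)
  then have "dist (f t x) (f t y) < \<epsilon>" for t
    using assms(3) by (rule order_le_less_trans)
  then have "y \<in> Gamma f \<epsilon> x"
    by (simp add: Gamma_def)
  then obtain r where "r \<in> {-S..S}" "y = f r x"
    using assms(1) by (auto simp: flow_seg_def)
  moreover have "dist y x \<le> c"
    using close[of 0] by (simp add: dist_commute)
  ultimately show ?thesis
    using y(2) by blast
qed

lemma Inter_NE_at_subset_NE:
  assumes "s > 0" "\<epsilon> > 0"
  shows "(\<Inter>n. NE_at s (1 / Suc n)) \<subseteq> NE f \<epsilon>"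
proof
  fix x assume x: "x \<in> (\<Inter>n. NE_at s (1 / Suc n))"
  show "x \<in> NE f \<epsilon>"
  proof (rule ccontr)
    assume "x \<notin> NE f \<epsilon>"
    then obtain S where Gamma: "Gamma f \<epsilon> x \<subseteq> flow_seg f (- S) S {x}"
      unfolding NE_def by auto
    obtain N where N: "1 / Suc N < \<epsilon>"
      using \<open>\<epsilon> > 0\<close> by (rule nat_approx_posE)
    have "\<exists>r\<in>{-S..S}. dist (f r x) x \<le> 1 / Suc (n + N) \<and> f r x \<notin> flow_seg f (- s) s {x}" for n
    proof (rule NE_at_return[OF Gamma])
      show "x \<in> NE_at s (1 / Suc (n + N))"
        using x by blast
      show "1 / Suc (n + N) < \<epsilon>"
        using N by (rule order_le_less_trans[rotated]) (simp add: frac_le)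
    qed
    then obtain r where r: "\<And>n. r n \<in> {-S..S}" "\<And>n. dist (f (r n) x) x \<le> 1 / Suc (n + N)"
      "\<And>n. f (r n) x \<notin> flow_seg f (- s) s {x}"
      by metis
    have "(\<lambda>n. dist (f (r n) x) x) \<longlonglongrightarrow> 0"
    proof (rule tendsto_sandwich[OF _ _ tendsto_const
          LIMSEQ_ignore_initial_segment[OF lim_1_over_n, of "Suc N"]])
      show "\<forall>\<^sub>F n in sequentially. 0 \<le> dist (f (r n) x) x"
        by simp
      show "\<forall>\<^sub>F n in sequentially. dist (f (r n) x) x \<le> 1 / real (n + Suc N)"
        using r(2) by (intro always_eventually allI) simp
    qed
    then have "(\<lambda>n. f (r n) x) \<longlonglongrightarrow> x"
      by (rule tendsto_dist_iff[THEN iffD2])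
    then have "\<exists>n. f (r n) x \<in> flow_seg f (- s) s {x}"
      by (rule convergent_returns_in_flow_seg[OF \<open>s > 0\<close> r(1)])
    with r(3) show False
      by blast
  qed
qed

lemma measure_NE_at_small:
  fixes \<nu> :: "'a measure"
  assumes "finite_measure \<nu>" "sets \<nu> = sets borel" "almost_expansive f \<nu> \<epsilon>"
    and "\<epsilon> > 0" "s > 0" "e > 0"
  shows "\<exists>c>0. measure \<nu> (NE_at s c) < e"
proof -
  interpret finite_measure \<nu> by fact
  have sets: "range (\<lambda>n. NE_at s (1 / Suc n)) \<subseteq> sets \<nu>"
    using NE_at_borel assms(2) by auto
  have dec: "decseq (\<lambda>n. NE_at s (1 / Suc n))"
    unfolding decseq_def by (intro allI impI NE_at_mono) (simp add: frac_le)
  have "(\<Inter>n. NE_at s (1 / Suc n)) \<in> null_sets \<nu>"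
  proof (rule null_sets_subset)
    show "NE f \<epsilon> \<in> null_sets \<nu>"
      using assms(3) by (simp add: almost_expansive_def)
    show "(\<Inter>n. NE_at s (1 / Suc n)) \<in> sets \<nu>"
      using sets by (intro sets.countable_INT) auto
    show "(\<Inter>n. NE_at s (1 / Suc n)) \<subseteq> NE f \<epsilon>"
      using \<open>s > 0\<close> \<open>\<epsilon> > 0\<close> by (rule Inter_NE_at_subset_NE)
  qed
  then obtain n where "measure \<nu> (NE_at s (1 / Suc n)) < e"
    using decseq_measure_less[OF sets dec _ \<open>e > 0\<close>] by (auto simp: measure_eq_0_null_sets)
  then show ?thesis
    by (intro exI[of _ "1 / Suc n"]) simp
qed

lemma compact_inner_approx:
  fixes M :: "'a measure"
  assumes "finite_measure M" "sets M = sets borel" "B \<in> sets M" "e > 0"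
  shows "\<exists>K. compact K \<and> K \<subseteq> B \<and> measure M (B - K) < e"
proof -
  interpret finite_measure M by fact
  obtain K G where "closed K" "open G" "K \<subseteq> B" "B \<subseteq> G" "measure M (G - K) < e"
    using borel_closed_open_regular[OF assms(1,2)] assms(2-4)
    unfolding closed_open_regular_def by metis
  moreover have "measure M (B - K) \<le> measure M (G - K)"
    using \<open>closed K\<close> \<open>open G\<close> \<open>B \<subseteq> G\<close> assms(2)
    by (intro finite_measure_mono) (auto simp: borel_open borel_closed)
  ultimately show ?thesis
    using closed_imp_compact by fastforce
qed

lemma compact_inner_approx_avoiding:
  fixes M :: "'a measure"
  assumes "finite_measure M" "sets M = sets borel" "A \<in> sets M" "N \<in> sets M" "measure M N < e"
  shows "\<exists>K. compact K \<and> K \<subseteq> A - N \<and> measure M (A - K) < e"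
proof -
  interpret finite_measure M by fact
  obtain K where K: "compact K" "K \<subseteq> A - N" "measure M ((A - N) - K) < e - measure M N"
    using compact_inner_approx[OF assms(1,2), of "A - N" "e - measure M N"] assms(3-5) by auto
  have "K \<in> sets M"
    using K(1) assms(2) by (simp add: borel_closed compact_imp_closed)
  then have "measure M (A - K) \<le> measure M (N \<union> ((A - N) - K))"
    using assms(3,4) by (intro finite_measure_mono) auto
  also have "\<dots> \<le> measure M N + measure M ((A - N) - K)"
    using assms(3,4) \<open>K \<in> sets M\<close> by (intro measure_Un_le) auto
  finally have "measure M (A - K) < e"
    using K(3) by linarith
  with K(1,2) show ?thesis
    by blast
qed

definition shadow :: "'a set \<Rightarrow> real \<Rightarrow> real \<Rightarrow> 'a set" where
  "shadow K c T = {z. \<exists>y\<in>K. \<forall>u\<in>{-T..T}. dist (f u y) (f u z) \<le> c}"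

lemma closed_shadow:
  assumes "compact K"
  shows "closed (shadow K c T)"
proof -
  define P where "P = (K \<times> UNIV) \<inter> {p. \<forall>u\<in>{-T..T}. dist (f u (fst p)) (f u (snd p)) \<le> c}"
  have "shadow K c T = snd ` P"
    by (force simp: shadow_def P_def)
  moreover have "closed P"
    unfolding P_def using assms
    by (intro closed_Int closed_Times compact_imp_closed closed_UNIV closed_Collect_ball_le
        continuous_intros)
  ultimately show ?thesis
    by (simp add: closed_snd_image)
qed

lemma shadow_antimono: "T \<le> T' \<Longrightarrow> shadow K c T' \<subseteq> shadow K c T"
  unfolding shadow_def by force

lemma Inter_shadow_subset_flow_seg:
  assumes "compact K" "K \<inter> NE_at s c = {}"
  shows "(\<Inter>n. shadow K c (real n)) \<subseteq> flow_seg f (- s) s K"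
proof
  fix z assume "z \<in> (\<Inter>n. shadow K c (real n))"
  then have "\<forall>n. \<exists>y\<in>K. \<forall>u\<in>{- real n..real n}. dist (f u y) (f u z) \<le> c"
    by (auto simp: shadow_def)
  then obtain y where y: "\<And>n. y n \<in> K" "\<And>n u. u \<in> {- real n..real n} \<Longrightarrow> dist (f u (y n)) (f u z) \<le> c"
    by metis
  obtain x \<phi> where "x \<in> K" "strict_mono \<phi>" and lim: "(y \<circ> \<phi>) \<longlonglongrightarrow> x"
    using seq_compactE[OF compact_imp_seq_compact[OF assms(1)], of y] y(1) by blast
  have "dist (f u x) (f u z) \<le> c" for u
  proof (rule LIMSEQ_le_const2)
    show "(\<lambda>n. dist (f u (y (\<phi> n))) (f u z)) \<longlonglongrightarrow> dist (f u x) (f u z)"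
      using lim by (intro tendsto_intros) (simp add: o_def)
    obtain N where N: "\<bar>u\<bar> \<le> real N"
      using real_arch_simple by blast
    have "dist (f u (y (\<phi> n))) (f u z) \<le> c" if "n \<ge> N" for n
    proof (rule y(2))
      have "real N \<le> real (\<phi> n)"
        using seq_suble[OF \<open>strict_mono \<phi>\<close>, of n] that by simp
      with N show "u \<in> {- real (\<phi> n)..real (\<phi> n)}"
        by auto
    qed
    then show "\<exists>N. \<forall>n\<ge>N. dist (f u (y (\<phi> n))) (f u z) \<le> c"
      by blast
  qed
  then have "z \<in> closed_Gamma c x"
    by (simp add: closed_Gamma_def)
  moreover have "x \<notin> NE_at s c"
    using assms(2) \<open>x \<in> K\<close> by blast
  ultimately show "z \<in> flow_seg f (- s) s K"
    using \<open>x \<in> K\<close> unfolding NE_at_def flow_seg_def by blast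
qed

lemma measure_shadow_minus_flow_seg_small:
  fixes \<nu> :: "'a measure"
  assumes "finite_measure \<nu>" "sets \<nu> = sets borel" "compact K" "K \<inter> NE_at s c = {}" "\<kappa> > 0"
  shows "\<exists>T\<ge>0. measure \<nu> (shadow K c T - flow_seg f (- s) s K) < \<kappa>"
proof -
  interpret finite_measure \<nu> by fact
  have sets: "range (\<lambda>n. shadow K c (real n) - flow_seg f (- s) s K) \<subseteq> sets \<nu>"
    using closed_shadow compact_flow_seg assms(2,3)
    by (intro image_subsetI sets.Diff) (simp_all add: borel_closed compact_imp_closed)
  have dec: "decseq (\<lambda>n. shadow K c (real n) - flow_seg f (- s) s K)"
    unfolding decseq_def using shadow_antimono by (intro allI impI Diff_mono) auto
  have "(\<Inter>n. shadow K c (real n) - flow_seg f (- s) s K) = {}"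
    using Inter_shadow_subset_flow_seg[OF assms(3,4)] by auto
  then obtain n where "measure \<nu> (shadow K c (real n) - flow_seg f (- s) s K) < \<kappa>"
    using decseq_measure_less[OF sets dec _ \<open>\<kappa> > 0\<close>] by (metis measure_empty)
  then show ?thesis
    by (intro exI[of _ "real n"]) auto
qed

lemma closed_bowen_ball_middle_dist:
  assumes "y \<in> closed_bowen_ball f t x \<rho>" "z \<in> closed_bowen_ball f t x \<rho>" "\<bar>u\<bar> \<le> t / 2"
  shows "dist (f u (f (t / 2) y)) (f u (f (t / 2) z)) \<le> 2 * \<rho>"
proof -
  have "u + t / 2 \<in> {0..t}"
    using assms(3) by auto
  then have "dist (f (u + t / 2) x) (f (u + t / 2) y) \<le> \<rho>"
    and "dist (f (u + t / 2) x) (f (u + t / 2) z) \<le> \<rho>"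
    using assms(1,2) unfolding closed_bowen_ball_def by blast+
  then show ?thesis
    using dist_triangle2[of "f (u + t / 2) y" "f (u + t / 2) z" "f (u + t / 2) x"]
    by (simp add: flow_add dist_commute)
qed

lemma adapted_partition_union_between:
  assumes "adapted_partition f t \<rho> E P" "2 * T \<le> t"
  shows "\<exists>\<U>\<subseteq>P. K \<subseteq> f (t / 2) ` \<Union>\<U> \<and> f (t / 2) ` \<Union>\<U> \<subseteq> shadow K (2 * \<rho>) T"
proof (intro exI conjI)
  let ?U = "{A \<in> P. f (t / 2) ` A \<inter> K \<noteq> {}}"
  show "?U \<subseteq> P"
    by blast
  show "K \<subseteq> f (t / 2) ` \<Union>?U"
  proof
    fix y assume "y \<in> K"
    have "\<Union>P = UNIV"
      using assms(1) by (simp add: adapted_partition_def borel_partition_def)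
    then obtain A where "A \<in> P" "f (- (t / 2)) y \<in> A"
      by blast
    moreover have "y = f (t / 2) (f (- (t / 2)) y)"
      by simp
    ultimately show "y \<in> f (t / 2) ` \<Union>?U"
      using \<open>y \<in> K\<close> by blast
  qed
  show "f (t / 2) ` \<Union>?U \<subseteq> shadow K (2 * \<rho>) T"
  proof
    fix w assume "w \<in> f (t / 2) ` \<Union>?U"
    then obtain A y z where "A \<in> P" "y \<in> A" "f (t / 2) y \<in> K" "z \<in> A" "w = f (t / 2) z"
      by blast
    moreover obtain x where "A \<subseteq> closed_bowen_ball f t x \<rho>"
      using assms(1) \<open>A \<in> P\<close> unfolding adapted_partition_def by blast
    moreover have "\<bar>u\<bar> \<le> t / 2" if "u \<in> {-T..T}" for u
      using that assms(2) by auto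
    ultimately have "dist (f u (f (t / 2) y)) (f u w) \<le> 2 * \<rho>" if "u \<in> {-T..T}" for u
      using closed_bowen_ball_middle_dist[of y t x \<rho> z u] that by auto
    then show "w \<in> shadow K (2 * \<rho>) T"
      using \<open>f (t / 2) y \<in> K\<close> unfolding shadow_def by blast
  qed
qed

lemma adapted_partitions_approximate:
  fixes \<nu> :: "'a measure" and \<A> :: "real \<Rightarrow> 'a set set"
  assumes fin: "finite_measure \<nu>" and sb: "sets \<nu> = sets borel" and "s \<le> S"
    and NE_small: "measure \<nu> (NE_at s (2 * \<rho>)) < \<alpha>"
    and adapted: "\<And>t. t > 0 \<Longrightarrow> \<exists>E. adapted_partition f t \<rho> E (\<A> t)"
    and A: "A \<in> sets \<nu>" and "\<kappa> > 0"
  shows "\<exists>t0>0. \<forall>t\<ge>t0. \<exists>\<U>\<subseteq>\<A> t.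
    outer_less \<nu> (f (t / 2) ` \<Union>\<U> - flow_seg f (- S) S A) (ennreal \<kappa>) \<and>
    outer_less \<nu> (A - f (t / 2) ` \<Union>\<U>) (ennreal \<alpha>)"
proof -
  interpret finite_measure \<nu> by fact
  obtain K where K: "compact K" "K \<subseteq> A - NE_at s (2 * \<rho>)" and A_K: "measure \<nu> (A - K) < \<alpha>"
    using compact_inner_approx_avoiding[OF fin sb A NE_at_borel[folded sb] NE_small] by blast
  have K_sets: "K \<in> sets \<nu>"
    using K(1) sb by (simp add: borel_closed compact_imp_closed)
  obtain T where "T \<ge> 0" and T: "measure \<nu> (shadow K (2 * \<rho>) T - flow_seg f (- s) s K) < \<kappa>"
    using measure_shadow_minus_flow_seg_small[OF fin sb K(1), of s "2 * \<rho>" \<kappa>] K(2) \<open>\<kappa> > 0\<close>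
    by auto
  have shadow_sets: "shadow K (2 * \<rho>) T - flow_seg f (- s) s K \<in> sets \<nu>"
    using closed_shadow[OF K(1)] compact_flow_seg[OF K(1)] sb
    by (intro sets.Diff) (simp_all add: borel_closed compact_imp_closed)
  have "flow_seg f (- s) s K \<subseteq> flow_seg f (- S) S A"
    using K(2) \<open>s \<le> S\<close> by (intro flow_seg_mono) auto
  show ?thesis
  proof (rule exI[of _ "2 * T + 1"], intro conjI allI impI)
    fix t assume "2 * T + 1 \<le> t"
    then obtain E where "adapted_partition f t \<rho> E (\<A> t)"
      using adapted \<open>T \<ge> 0\<close> by fastforce
    then obtain \<U> where U: "\<U> \<subseteq> \<A> t" "K \<subseteq> f (t / 2) ` \<Union>\<U>" "f (t / 2) ` \<Union>\<U> \<subseteq> shadow K (2 * \<rho>) T"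
      using adapted_partition_union_between[of t \<rho> E "\<A> t" T K] \<open>2 * T + 1 \<le> t\<close> by auto
    have "outer_less \<nu> (f (t / 2) ` \<Union>\<U> - flow_seg f (- S) S A) (ennreal \<kappa>)"
      using U(3) \<open>flow_seg f (- s) s K \<subseteq> flow_seg f (- S) S A\<close>
      by (intro outer_lessI[OF fin shadow_sets _ T]) blast
    moreover have "outer_less \<nu> (A - f (t / 2) ` \<Union>\<U>) (ennreal \<alpha>)"
      using U(2) A K_sets by (intro outer_lessI[OF fin _ _ A_K]) auto
    ultimately show "\<exists>\<U>\<subseteq>\<A> t. outer_less \<nu> (f (t / 2) ` \<Union>\<U> - flow_seg f (- S) S A) (ennreal \<kappa>) \<and>
        outer_less \<nu> (A - f (t / 2) ` \<Union>\<U>) (ennreal \<alpha>)"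
      using U(1) by blast
  qed (use \<open>T \<ge> 0\<close> in simp)
qed

end

theorem proposition4p1:
  fixes f :: "real \<Rightarrow> 'a::metric_space \<Rightarrow> 'a" and \<nu> :: "'a measure"
    and \<epsilon> s \<alpha> :: real
  assumes "compact (UNIV :: 'a set)"
    and "continuous_flow f"
    and "invariant_borel_prob f \<nu>"
    and "\<epsilon> > 0"
    and "almost_expansive f \<nu> \<epsilon>"
    and "s > 0" and "\<alpha> > 0"
  shows "\<exists>\<rho>0>0. \<forall>\<rho>. 0 < \<rho> \<and> \<rho> < \<rho>0 \<and> \<rho> < \<epsilon> / 2 \<longrightarrow>
     (\<forall>\<A> :: real \<Rightarrow> 'a set set.
        (\<forall>t>0. \<exists>E. max_separated f t \<rho> E \<and> adapted_partition f t \<rho> E (\<A> t)) \<longrightarrow>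
        (\<forall>A \<in> sets \<nu>. emeasure \<nu> A > 0 \<longrightarrow>
          (\<forall>\<kappa>>0. \<exists>t0>0. \<forall>t\<ge>t0. \<exists>\<U>. \<U> \<subseteq> \<A> t \<and>
              outer_less \<nu> (f (t/2) ` (\<Union>\<U>) - flow_seg f (- (3 * s)) (3 * s) A) (ennreal \<kappa>) \<and>
              outer_less \<nu> (A - f (t/2) ` (\<Union>\<U>)) (ennreal \<alpha>))))"
proof -
  interpret compact_flow f
    using assms(1,2) by unfold_locales
  have fin: "finite_measure \<nu>" and sb: "sets \<nu> = sets borel"
    using assms(3) by (auto simp: invariant_borel_prob_def prob_space_def)
  obtain c where "c > 0" and c: "measure \<nu> (NE_at s c) < \<alpha>"
    using measure_NE_at_small[OF fin sb assms(5,4,6,7)] by auto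
  show ?thesis
  proof (rule exI[of _ "c / 2"], intro conjI allI impI ballI)
    fix \<rho> \<kappa> :: real and \<A> :: "real \<Rightarrow> 'a set set" and A :: "'a set"
    assume \<rho>: "0 < \<rho> \<and> \<rho> < c / 2 \<and> \<rho> < \<epsilon> / 2"
      and adapted: "\<forall>t>0. \<exists>E. max_separated f t \<rho> E \<and> adapted_partition f t \<rho> E (\<A> t)"
      and "A \<in> sets \<nu>" "0 < emeasure \<nu> A" "0 < \<kappa>"
    have "measure \<nu> (NE_at s (2 * \<rho>)) \<le> measure \<nu> (NE_at s c)"
      using \<rho> NE_at_borel[of s c] sb
      by (intro finite_measure.finite_measure_mono[OF fin] NE_at_mono) auto
    then show "\<exists>t0>0. \<forall>t\<ge>t0. \<exists>\<U>. \<U> \<subseteq> \<A> t \<and>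
        outer_less \<nu> (f (t/2) ` (\<Union>\<U>) - flow_seg f (- (3 * s)) (3 * s) A) (ennreal \<kappa>) \<and>
        outer_less \<nu> (A - f (t/2) ` (\<Union>\<U>)) (ennreal \<alpha>)"
      using adapted_partitions_approximate[OF fin sb, of s "3 * s" \<rho> \<alpha> \<A> A \<kappa>]
        c adapted \<open>A \<in> sets \<nu>\<close> \<open>0 < \<kappa>\<close> \<open>s > 0\<close> by fastforce
  qed (use \<open>c > 0\<close> in simp)
qed

end
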